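(* Let $M$ be a $0/1$-matrix, let $B$ be a block of $M$, and let $i,j$ be two entries of the input boundary $B^-$ with $i<j$ (in the input-boundary order). Let $\sigma(i)$ be an entry of the output boundary $B^+$ that is reachable from $i$, and let $\sigma(j)$ be an entry of $B^+$ that is reachable from $j$. If $\sigma(j)<\sigma(i)$ (in the output-boundary order), then $\sigma(j)$ is also reachable from $i$ and $\sigma(i)$ is also reachable from $j$.
   Context: Let $M$ be an $m\times n$ $0/1$-matrix with entries indexed $(r,s)$, $1\le r\le m$ (rows, thought of as increasing from bottom to top), $1\le s\le n$ (columns, increasing from left to right). A path from $(k,l)$ to $(i,j)$ is a sequence of $1$-entries starting at $(k,l)$ and ending at $(i,j)$ in which each step goes from $(r,s)$ to $(r+1,s)$, $(r,s+1)$ or $(r+1,s+1)$; $(i,j)$ is reachable from $(k,l)$ if such a path exists. A block $B$ is the submatrix formed by a contiguous range of rows $r^-\le r\le r^+$ and a contiguous range of columns $s^-\le s\le s^+$. Its input boundary $B^-$ consists of the entries in row $r^-$ or column $s^-$ of $B$, ordered as follows: first the entries of row $r^-$ from column $s^+$ down to column $s^-$, then the remaining entries of column $s^-$ from row $r^-+1$ up to $r^+$. Its output boundary $B^+$ consists of the entries in row $r^+$ or column $s^+$ of $B$, ordered as follows: first the entries of column $s^+$ from row $r^-$ up to row $r^+$, then the remaining entries of row $r^+$ from column $s^+-1$ down to $s^-$. *)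

theory Defs
  imports Main
begin

(* An m x n 0/1-matrix is a function M :: nat => nat => nat; entries (r,s) with
   1 <= r <= m, 1 <= s <= n are meaningful. *)

definition entry_ok :: "nat \<Rightarrow> nat \<Rightarrow> (nat \<Rightarrow> nat \<Rightarrow> nat) \<Rightarrow> nat \<times> nat \<Rightarrow> bool" where
  "entry_ok m n M p \<longleftrightarrow> 1 \<le> fst p \<and> fst p \<le> m \<and> 1 \<le> snd p \<and> snd p \<le> n \<and> M (fst p) (snd p) = 1"

definition step :: "nat \<times> nat \<Rightarrow> nat \<times> nat \<Rightarrow> bool" where
  "step p q \<longleftrightarrow> q = (fst p + 1, snd p) \<or> q = (fst p, snd p + 1) \<or> q = (fst p + 1, snd p + 1)"

inductive reachable :: "nat \<Rightarrow> nat \<Rightarrow> (nat \<Rightarrow> nat \<Rightarrow> nat) \<Rightarrow> nat \<times> nat \<Rightarrow> nat \<times> nat \<Rightarrow> bool"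
  for m n M where
  refl: "entry_ok m n M p \<Longrightarrow> reachable m n M p p"
| step: "reachable m n M p q \<Longrightarrow> step q q' \<Longrightarrow> entry_ok m n M q' \<Longrightarrow> reachable m n M p q'"

definition input_boundary :: "nat \<Rightarrow> nat \<Rightarrow> nat \<Rightarrow> nat \<Rightarrow> (nat \<times> nat) list" where
  "input_boundary r1 r2 s1 s2 =
     map (\<lambda>s. (r1, s)) (rev [s1..<s2+1]) @ map (\<lambda>r. (r, s1)) [r1+1..<r2+1]"

definition output_boundary :: "nat \<Rightarrow> nat \<Rightarrow> nat \<Rightarrow> nat \<Rightarrow> (nat \<times> nat) list" where
  "output_boundary r1 r2 s1 s2 =
     map (\<lambda>r. (r, s2)) [r1..<r2+1] @ map (\<lambda>s. (r2, s)) (rev [s1..<s2])"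

end

theory Submission
  imports Defs
begin

text \<open>Call a point on some path from \<open>A\<close> to \<open>C\<close> a point of the route from \<open>A\<close> to \<open>C\<close>, and call
  a point off the route lying weakly north-west of a route point north-west of the route.
  If \<open>C\<close> lies on the output boundary, a monotone path inside the block that starts
  north-west of the route stays north-west of it until it meets the route: to step east past a
  column, the route must itself have turned east below the current row.  The input order puts
  \<open>B\<close> on or north-west of the route from \<open>A\<close> to \<open>C\<close>, while the output order forbids \<open>D\<close>
  to be north-west of it.  Hence the path from \<open>B\<close> to \<open>D\<close> meets the route in a point \<open>z\<close>, and
  \<open>A \<rightarrow> z \<rightarrow> D\<close>, \<open>B \<rightarrow> z \<rightarrow> C\<close> are the required paths.\<close>

lemma length_output_boundary:
  "r1 \<le> r2 \<Longrightarrow> length (output_boundary r1 r2 s1 s2) = Suc (r2 - r1) + (s2 - s1)"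
  by (simp add: output_boundary_def)

lemma nth_input_boundary:
  assumes "i < length (input_boundary r1 r2 s1 s2)" "s1 \<le> s2"
  shows "input_boundary r1 r2 s1 s2 ! i =
    (if i \<le> s2 - s1 then (r1, s2 - i) else (r1 + (i - (s2 - s1)), s1))"
  using assms by (auto simp: input_boundary_def nth_append rev_nth simp del: upt_Suc)

lemma nth_output_boundary:
  assumes "i < length (output_boundary r1 r2 s1 s2)" "r1 \<le> r2"
  shows "output_boundary r1 r2 s1 s2 ! i =
    (if i \<le> r2 - r1 then (r1 + i, s2) else (r2, s2 - (i - (r2 - r1))))"
  using assms by (auto simp: output_boundary_def nth_append rev_nth simp del: upt_Suc)

lemma input_boundary_order:
  assumes "a < b" "b < length (input_boundary r1 r2 s1 s2)" "s1 \<le> s2"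
  defines "A \<equiv> input_boundary r1 r2 s1 s2 ! a" and "B \<equiv> input_boundary r1 r2 s1 s2 ! b"
  shows "fst A \<le> fst B \<and> snd B \<le> snd A"
  using assms nth_input_boundary[of a r1 r2 s1 s2] nth_input_boundary[of b r1 r2 s1 s2]
  by auto

lemma output_boundary_in_block:
  assumes "c < length (output_boundary r1 r2 s1 s2)" "r1 \<le> r2"
  defines "C \<equiv> output_boundary r1 r2 s1 s2 ! c"
  shows "fst C \<le> r2" "snd C \<le> s2" "snd C = s2 \<or> fst C = r2"
  using assms nth_output_boundary[of c r1 r2 s1 s2] by auto

lemma output_boundary_dominated:
  assumes "d < c" "c < length (output_boundary r1 r2 s1 s2)" "r1 \<le> r2" "s1 \<le> s2"
  defines "C \<equiv> output_boundary r1 r2 s1 s2 ! c" and "D \<equiv> output_boundary r1 r2 s1 s2 ! d"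
  assumes "fst y \<le> fst C" "snd y \<le> snd C" "fst y \<le> fst D" "snd D \<le> snd y"
  shows "snd y = snd C \<and> snd D = snd C \<and> fst D \<le> fst C"
proof -
  have "C = (if c \<le> r2 - r1 then (r1 + c, s2) else (r2, s2 - (c - (r2 - r1))))"
    using assms nth_output_boundary by simp
  moreover have "D = (if d \<le> r2 - r1 then (r1 + d, s2) else (r2, s2 - (d - (r2 - r1))))"
    using assms nth_output_boundary by simp
  moreover have "c < Suc (r2 - r1) + (s2 - s1)"
    using assms(2,3) length_output_boundary by metis
  ultimately show ?thesis
    using assms(1,7-) by (auto split: if_splits)
qed

context
  fixes m n :: nat and M :: "nat \<Rightarrow> nat \<Rightarrow> nat"
begin

lemma reachable_entry_ok: "reachable m n M p q \<Longrightarrow> entry_ok m n M p \<and> entry_ok m n M q"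
  by (induction rule: reachable.induct) auto

lemma reachable_monotone: "reachable m n M p q \<Longrightarrow> fst p \<le> fst q \<and> snd p \<le> snd q"
  by (induction rule: reachable.induct) (auto simp: step_def)

lemma reachable_trans:
  assumes "reachable m n M p q" "reachable m n M q r"
  shows "reachable m n M p r"
  using assms(2,1) by (induction rule: reachable.induct) (auto intro: reachable.step)

lemma reachable_first_step:
  "reachable m n M p q \<Longrightarrow> p = q \<or> (\<exists>w. step p w \<and> reachable m n M w q)"
proof (induction rule: reachable.induct)
  case (step p q q')
  then show ?case by (metis reachable.refl reachable.step)
qed simp

lemma reachable_column_segment:
  "reachable m n M p q \<Longrightarrow> snd p = snd q \<Longrightarrow> fst p \<le> r \<Longrightarrow> r \<le> fst q
   \<Longrightarrow> reachable m n M p (r, snd q) \<and> reachable m n M (r, snd q) q"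
proof (induction rule: reachable.induct)
  case (refl p)
  then show ?case by (cases p) (auto intro: reachable.refl)
next
  case (step p q q')
  have "snd p \<le> snd q" using reachable_monotone[OF step.hyps(1)] by simp
  moreover have "snd q \<le> snd q'" using step.hyps(2) by (auto simp: step_def)
  ultimately have same_column: "snd q = snd q'" using step.prems by simp
  then have q': "q' = (fst q + 1, snd q)" using step.hyps(2) by (auto simp: step_def prod_eq_iff)
  show ?case
  proof (cases "r \<le> fst q")
    case True
    then show ?thesis using step same_column by (auto intro: reachable.step)
  next
    case False
    then have "(r, snd q') = q'" using q' step.prems same_column by (auto simp: prod_eq_iff)
    then show ?thesis using step.hyps by (auto intro: reachable.step reachable.refl)
  qed
qed

definition on_route :: "nat \<times> nat \<Rightarrow> nat \<times> nat \<Rightarrow> nat \<times> nat \<Rightarrow> bool" where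
  "on_route A C y \<longleftrightarrow> reachable m n M A y \<and> reachable m n M y C"

definition northwest_of_route :: "nat \<times> nat \<Rightarrow> nat \<times> nat \<Rightarrow> nat \<times> nat \<Rightarrow> bool" where
  "northwest_of_route A C x \<longleftrightarrow>
     \<not> on_route A C x \<and> (\<exists>y. on_route A C y \<and> fst y \<le> fst x \<and> snd x \<le> snd y)"

lemma on_route_step:
  assumes "on_route A C y" "y \<noteq> C"
  obtains w where "step y w" "on_route A C w"
proof -
  obtain w where "step y w" "reachable m n M w C"
    using assms reachable_first_step unfolding on_route_def by blast
  moreover have "reachable m n M A w"
    using assms calculation reachable_entry_ok unfolding on_route_def by (blast intro: reachable.step)
  ultimately show thesis using that unfolding on_route_def by blast
qed

text \<open>Climbing its column from \<open>y\<close>, the route cannot pass through the point \<open>x\<close> off the route,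
  nor end below it (\<open>C\<close> is on the east column or the top row), so it turns east at or below
  row \<open>fst x\<close>.\<close>

lemma route_turns_east_below:
  assumes bd: "snd C = s2 \<or> fst C = r2"
  shows "on_route A C y \<Longrightarrow> snd y = snd x \<Longrightarrow> fst y < fst x \<Longrightarrow> \<not> on_route A C x
     \<Longrightarrow> snd x < s2 \<Longrightarrow> fst x \<le> r2 \<Longrightarrow> \<exists>w. on_route A C w \<and> snd w = snd x + 1 \<and> fst w \<le> fst x"
proof (induction "fst x - fst y" arbitrary: y rule: less_induct)
  case less
  have "y \<noteq> C" using less.prems bd by auto
  then obtain w where st: "step y w" and w: "on_route A C w"
    using on_route_step less.prems(1) by blast
  consider "w = (fst y + 1, snd y)" | "snd w = snd y + 1" "fst w \<le> fst y + 1"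
    using st by (auto simp: step_def)
  then show ?case
  proof cases
    case 1
    then have "w \<noteq> x" using w less.prems by auto
    then have "fst w < fst x" using 1 less.prems by (auto simp: prod_eq_iff)
    then show ?thesis using less.hyps[of w] 1 less.prems w by simp
  next
    case 2
    then show ?thesis using w less.prems by (intro exI[of _ w]) simp
  qed
qed

lemma northwest_of_route_step:
  assumes bd: "snd C = s2 \<or> fst C = r2"
    and nw: "northwest_of_route A C q" and st: "step q q'" and off: "\<not> on_route A C q'"
    and "fst q \<le> r2" "snd q' \<le> s2"
  shows "northwest_of_route A C q'"
proof -
  obtain y where y: "on_route A C y" "fst y \<le> fst q" "snd q \<le> snd y"
    and q: "\<not> on_route A C q"
    using nw unfolding northwest_of_route_def by blast
  have q'_ge: "fst q \<le> fst q'" "snd q' \<le> snd q + 1" using st by (auto simp: step_def)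
  show ?thesis
  proof (cases "snd q' \<le> snd y")
    case True
    then show ?thesis using y off q'_ge unfolding northwest_of_route_def by (intro conjI exI[of _ y]) auto
  next
    case False
    then have "snd y = snd q" "snd q' = snd q + 1" using y q'_ge by auto
    moreover have "fst y < fst q"
      using \<open>snd y = snd q\<close> y q by (cases "y = q") (auto simp: prod_eq_iff)
    ultimately obtain w where "on_route A C w" "snd w = snd q'" "fst w \<le> fst q"
      using route_turns_east_below[OF bd, where A=A and y=y and x=q] y q assms(5,6) by auto
    then show ?thesis using off q'_ge unfolding northwest_of_route_def by (intro conjI exI[of _ w]) auto
  qed
qed

lemma path_meets_route_or_stays_northwest:
  assumes bd: "snd C = s2 \<or> fst C = r2"
  shows "reachable m n M x q \<Longrightarrow> fst q \<le> r2 \<Longrightarrow> snd q \<le> s2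
    \<Longrightarrow> on_route A C x \<or> northwest_of_route A C x
    \<Longrightarrow> (\<exists>z. on_route A C z \<and> reachable m n M x z \<and> reachable m n M z q) \<or> northwest_of_route A C q"
proof (induction rule: reachable.induct)
  case (refl p)
  then show ?case unfolding on_route_def by (metis reachable.refl)
next
  case (step p q q')
  have q: "fst q \<le> r2" "snd q \<le> s2" using step.hyps(2) step.prems by (auto simp: step_def)
  from step.IH[OF q step.prems(3)] show ?case
  proof
    assume "\<exists>z. on_route A C z \<and> reachable m n M p z \<and> reachable m n M z q"
    then show ?thesis using step.hyps by (blast intro: reachable.step)
  next
    assume nw: "northwest_of_route A C q"
    show ?thesis
    proof (cases "on_route A C q'")
      case True
      then show ?thesis using step.hyps by (blast intro: reachable.step reachable.refl)
    next
      case False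
      then show ?thesis
        using northwest_of_route_step[OF bd nw step.hyps(2) False q(1) step.prems(2)] by blast
    qed
  qed
qed

lemma earlier_output_not_northwest_of_route:
  assumes "d < c" "c < length (output_boundary r1 r2 s1 s2)" "r1 \<le> r2" "s1 \<le> s2"
  defines "C \<equiv> output_boundary r1 r2 s1 s2 ! c" and "D \<equiv> output_boundary r1 r2 s1 s2 ! d"
  shows "\<not> northwest_of_route A C D"
proof
  assume nw: "northwest_of_route A C D"
  then obtain y where y: "on_route A C y" "fst y \<le> fst D" "snd D \<le> snd y"
    unfolding northwest_of_route_def by blast
  then have "fst y \<le> fst C" "snd y \<le> snd C"
    using reachable_monotone unfolding on_route_def by blast+
  then have "snd y = snd C \<and> snd D = snd C \<and> fst D \<le> fst C"
    using output_boundary_dominated[OF assms(1-4)] y C_def D_def by blast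
  then have "on_route A C D"
    using reachable_column_segment[of y C "fst D"] y reachable_trans
    unfolding on_route_def by (metis prod.collapse)
  then show False using nw unfolding northwest_of_route_def by blast
qed

end

theorem mainTheorem3:
  fixes m n :: nat and M :: "nat \<Rightarrow> nat \<Rightarrow> nat"
    and r1 r2 s1 s2 :: nat and a b c d :: nat
  assumes zero_one: "\<forall>r s. 1 \<le> r \<and> r \<le> m \<and> 1 \<le> s \<and> s \<le> n \<longrightarrow> M r s \<in> {0, 1}"
    and block: "1 \<le> r1" "r1 \<le> r2" "r2 \<le> m" "1 \<le> s1" "s1 \<le> s2" "s2 \<le> n"
    and ij: "a < b" "b < length (input_boundary r1 r2 s1 s2)"
    and sig: "d < c" "c < length (output_boundary r1 r2 s1 s2)"
    and reach_i: "reachable m n M (input_boundary r1 r2 s1 s2 ! a) (output_boundary r1 r2 s1 s2 ! c)"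
    and reach_j: "reachable m n M (input_boundary r1 r2 s1 s2 ! b) (output_boundary r1 r2 s1 s2 ! d)"
  shows "reachable m n M (input_boundary r1 r2 s1 s2 ! a) (output_boundary r1 r2 s1 s2 ! d)
       \<and> reachable m n M (input_boundary r1 r2 s1 s2 ! b) (output_boundary r1 r2 s1 s2 ! c)"
proof -
  define A B C D where "A = input_boundary r1 r2 s1 s2 ! a" and "B = input_boundary r1 r2 s1 s2 ! b"
    and "C = output_boundary r1 r2 s1 s2 ! c" and "D = output_boundary r1 r2 s1 s2 ! d"
  have AC: "reachable m n M A C" and BD: "reachable m n M B D"
    using reach_i reach_j by (simp_all add: A_def B_def C_def D_def)
  have C_border: "snd C = s2 \<or> fst C = r2"
    using output_boundary_in_block sig block C_def by blast
  have D_in_block: "fst D \<le> r2" "snd D \<le> s2"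
    using output_boundary_in_block[of d] sig block D_def by auto
  have "on_route m n M A C B \<or> northwest_of_route m n M A C B"
    using input_boundary_order[OF ij block(5)] AC reachable_entry_ok[OF AC]
    unfolding A_def B_def northwest_of_route_def on_route_def by (blast intro: reachable.refl)
  then obtain z where "on_route m n M A C z" "reachable m n M B z" "reachable m n M z D"
    using path_meets_route_or_stays_northwest[OF C_border BD D_in_block]
      earlier_output_not_northwest_of_route[OF sig block(2,5)] C_def D_def by blast
  then show ?thesis
    using reachable_trans unfolding on_route_def A_def B_def C_def D_def by blast
qed

end
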